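(* Let $m\ge 3$. Call $\mathbf{x}=(x_1,\ldots,x_m)\in\mathbb{R}^m$ generic if the $\binom{m}{2}$ midpoints $(x_i+x_j)/2$, $1\le i<j\le m$, are pairwise distinct (in particular the $x_i$ are pairwise distinct). For such $\mathbf{x}$ define its ranking pattern $$\mathrm{RP}^{\mathrm{UF}}(\mathbf{x})=\{(i_1\cdots i_m)\in\mathbb{P}_m:\ |y-x_{i_1}|<\cdots<|y-x_{i_m}|\text{ for some }y\in\mathbb{R}\},$$ where $\mathbb{P}_m$ is the set of permutations $(i_1\cdots i_m)$ of $[m]=\{1,\ldots,m\}$. Two ranking patterns $\mathrm{RP}^{\mathrm{UF}}(\mathbf{x})$, $\mathrm{RP}^{\mathrm{UF}}(\mathbf{x}')$ are called equivalent if $\mathrm{RP}^{\mathrm{UF}}(\mathbf{x})=\{(\sigma(i_1)\cdots\sigma(i_m)):(i_1\cdots i_m)\in\mathrm{RP}^{\mathrm{UF}}(\mathbf{x}')\}$ for some bijection $\sigma:[m]\to[m]$. Let $r_{\mathrm{IE}}(m)$ be the number of equivalence classes of ranking patterns $\mathrm{RP}^{\mathrm{UF}}(\mathbf{x})$ with $\mathbf{x}\in\mathbb{R}^m$ generic, and let $r_0(m)$ be the number of distinct ranking patterns $\mathrm{RP}^{\mathrm{UF}}(\mathbf{x})$ with $\mathbf{x}$ generic and $x_1<\cdots<x_m$. Let $\mathcal{B}_m$ be the braid arrangement $\{\{x_i=x_j\}:1\le i<j\le m\}$ in $\mathbb{R}^m$ and $\mathcal{M}_m$ the mid-hyperplane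 arrangement consisting of the hyperplanes of $\mathcal{B}_m$ together with the hyperplanes $\{x_i+x_j=x_k+x_l\}$ for all $(i,j,k,l)$ with $i,j,k,l$ pairwise distinct, $1\le i<j\le m$, $i<k<l\le m$. Then $$r_{\mathrm{IE}}(m)=\begin{cases} r_0(3)=\dfrac{|\mathrm{ch}(\mathcal{B}_3)|}{3!}=1, & m=3,\\[2mm] \dfrac{r_0(m)}{2}=\dfrac{|\mathrm{ch}(\mathcal{M}_m)|}{2\cdot m!}, & m\ge 4,\end{cases}$$ where $\mathrm{ch}(\cdot)$ denotes the set of chambers (connected components of the complement of the union of the hyperplanes) of an arrangement. *)

theory Defs
  imports "HOL-Analysis.Analysis" "HOL-Combinatorics.Multiset_Permutations"
begin

text \<open>Points of R^m are modelled as functions nat => real, with coordinates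
  indexed by 1..m and value 0 outside {1..m}.\<close>

definition Rm :: "nat \<Rightarrow> (nat \<Rightarrow> real) set" where
  "Rm m = {x. \<forall>i. i \<notin> {1..m} \<longrightarrow> x i = 0}"

definition generic :: "nat \<Rightarrow> (nat \<Rightarrow> real) \<Rightarrow> bool" where
  "generic m x \<longleftrightarrow> x \<in> Rm m \<and>
     (\<forall>i j k l. 1 \<le> i \<and> i < j \<and> j \<le> m \<and> 1 \<le> k \<and> k < l \<and> l \<le> m \<and> (i, j) \<noteq> (k, l)
        \<longrightarrow> (x i + x j) / 2 \<noteq> (x k + x l) / 2)"

text \<open>Permutations (i_1 ... i_m) of [m] are lists.\<close>
definition RP_UF :: "nat \<Rightarrow> (nat \<Rightarrow> real) \<Rightarrow> nat list set" where
  "RP_UF m x = {p \<in> permutations_of_set {1..m}.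
      \<exists>y::real. sorted_wrt (<) (map (\<lambda>i. \<bar>y - x i\<bar>) p)}"

definition RP_equiv :: "nat \<Rightarrow> nat list set \<Rightarrow> nat list set \<Rightarrow> bool" where
  "RP_equiv m P Q \<longleftrightarrow> (\<exists>\<sigma>. bij_betw \<sigma> {1..m} {1..m} \<and> P = map \<sigma> ` Q)"

definition RPs :: "nat \<Rightarrow> nat list set set" where
  "RPs m = {RP_UF m x | x. generic m x}"

definition r_IE :: "nat \<Rightarrow> nat" where
  "r_IE m = card (RPs m // {(P, Q). P \<in> RPs m \<and> Q \<in> RPs m \<and> RP_equiv m P Q})"

definition r0 :: "nat \<Rightarrow> nat" where
  "r0 m = card {RP_UF m x | x. generic m x \<and> (\<forall>i. 1 \<le> i \<and> i < m \<longrightarrow> x i < x (Suc i))}"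

definition braid_arr :: "nat \<Rightarrow> (nat \<Rightarrow> real) set set" where
  "braid_arr m = {{x \<in> Rm m. x i = x j} | i j. 1 \<le> i \<and> i < j \<and> j \<le> m}"

definition mid_arr :: "nat \<Rightarrow> (nat \<Rightarrow> real) set set" where
  "mid_arr m = braid_arr m \<union>
     {{x \<in> Rm m. x i + x j = x k + x l} | i j k l.
        distinct [i, j, k, l] \<and> 1 \<le> i \<and> i < j \<and> j \<le> m \<and> i < k \<and> k < l \<and> l \<le> m}"

definition chambers :: "nat \<Rightarrow> (nat \<Rightarrow> real) set set \<Rightarrow> (nat \<Rightarrow> real) set set" where
  "chambers m A = {connected_component_set (Rm m - \<Union>A) x | x. x \<in> Rm m - \<Union>A}"

end

theory Submission
  imports Defs
begin

text \<open>Whether a point \<open>y\<close> realises a given ranking of a generic \<open>x\<close> depends only on which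
  midpoints \<open>(x\<^sub>i + x\<^sub>j) / 2\<close> lie below \<open>y\<close>. Hence the ranking pattern of \<open>x\<close> is determined
  by the sign vector of \<open>x\<close> with respect to the mid-hyperplane arrangement, and for points with
  sorted coordinates it determines that sign vector. The chambers of \<open>\<M>\<^sub>m\<close> are the sets of
  generic points with a common sign vector (a segment between two such points avoids every
  hyperplane), and permuting coordinates shows that there are \<open>m!\<close> times as many of them as
  sign vectors of sorted points, i.e. \<open>|ch(\<M>\<^sub>m)| = m! r\<^sub>0(m)\<close>.

  Every ranking pattern is equivalent to one of a sorted point. A relabelling between the patterns
  of two sorted points maps the patterns realised far to the left and far to the right to patterns
  of the other point, which forces it to be the identity or the reversal of \<open>[m]\<close>; the reversal
  corresponds to \<open>x \<mapsto> -x\<close>. For \<open>m \<ge> 4\<close> this reflection changes the pattern, so every class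
  contains exactly two patterns of sorted points, whereas for \<open>m = 3\<close> there is only one.\<close>

section \<open>Generic points\<close>

lemma generic_sum_neq:
  assumes "generic m x" "i \<in> {1..m}" "j \<in> {1..m}" "k \<in> {1..m}" "l \<in> {1..m}"
    and "i \<noteq> j" "k \<noteq> l" "{i, j} \<noteq> {k, l}"
  shows "x i + x j \<noteq> x k + x l"
proof -
  have sym: "x i + x j = x (min i j) + x (max i j)" "x k + x l = x (min k l) + x (max k l)"
    by (simp_all add: min_def max_def)
  have "(min i j, max i j) \<noteq> (min k l, max k l)"
    using assms(6-8) by (auto simp: min_def max_def doubleton_eq_iff split: if_splits)
  then have "(x (min i j) + x (max i j)) / 2 \<noteq> (x (min k l) + x (max k l)) / 2"
    by (intro generic_def[THEN iffD1, OF assms(1), THEN conjunct2, rule_format])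
      (use assms(2-7) in \<open>auto simp: min_def max_def\<close>)
  then show ?thesis unfolding sym by simp
qed

lemma genericI:
  assumes "x \<in> Rm m"
    and "\<And>i j k l. i \<in> {1..m} \<Longrightarrow> j \<in> {1..m} \<Longrightarrow> k \<in> {1..m} \<Longrightarrow> l \<in> {1..m} \<Longrightarrow>
           i \<noteq> j \<Longrightarrow> k \<noteq> l \<Longrightarrow> {i, j} \<noteq> {k, l} \<Longrightarrow> x i + x j \<noteq> x k + x l"
  shows "generic m x"
proof -
  have "(x i + x j) / 2 \<noteq> (x k + x l) / 2"
    if "1 \<le> i" "i < j" "j \<le> m" "1 \<le> k" "k < l" "l \<le> m" "(i, j) \<noteq> (k, l)" for i j k l
  proof -
    have "{i, j} \<noteq> {k, l}" using that by (auto simp: doubleton_eq_iff)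
    then show ?thesis using assms(2)[of i j k l] that by simp
  qed
  then show ?thesis unfolding generic_def using assms(1) by blast
qed

lemma generic_inj_on:
  assumes "generic m x" "3 \<le> m"
  shows "inj_on x {1..m}"
proof (rule inj_onI, rule ccontr)
  fix i j assume ij: "i \<in> {1..m}" "j \<in> {1..m}" "x i = x j" "i \<noteq> j"
  have "card ({1..m} - {i, j}) = m - 2"
    using ij by (subst card_Diff_subset) auto
  moreover have "m - 2 \<noteq> 0" using assms(2) by simp
  ultimately have "{1..m} - {i, j} \<noteq> {}" by (metis card.empty)
  then obtain k where k: "k \<in> {1..m}" "k \<noteq> i" "k \<noteq> j" by blast
  have "{i, k} \<noteq> {j, k}" using ij(4) k by (auto simp: doubleton_eq_iff)
  then have "x i + x k \<noteq> x j + x k"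
    using generic_sum_neq[OF assms(1) ij(1) k(1) ij(2) k(1)] ij(4) k by blast
  then show False using ij(3) by simp
qed

section \<open>Ranking patterns and sign vectors\<close>

lemma abs_diff_eq_imp_midpoint:
  fixes u v y :: real
  assumes "\<bar>y - u\<bar> = \<bar>y - v\<bar>" "u \<noteq> v"
  shows "u + v = 2 * y"
  using assms by (smt (verit))

lemma abs_diff_less_iff:
  fixes u v y :: real
  assumes "u \<noteq> v" "u + v \<noteq> 2 * y"
  shows "\<bar>y - u\<bar> < \<bar>y - v\<bar> \<longleftrightarrow> (u < v \<longleftrightarrow> 2 * y < u + v)"
  using assms by (smt (verit))

lemma sorted_wrt_less_map_transfer:
  assumes "sorted_wrt (<) (map f p)" "sorted_wrt (<) (map (g :: _ \<Rightarrow> 'b::linorder) p)"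
    and "i \<in> set p" "j \<in> set p" "(f i :: 'a::linorder) < f j"
  shows "g i < g j"
proof -
  obtain a b where ab: "a < length p" "p ! a = i" "b < length p" "p ! b = j"
    using assms(3,4) by (metis in_set_conv_nth)
  have "\<not> b < a"
  proof
    assume "b < a"
    then have "f j < f i" using assms(1) ab by (auto simp: sorted_wrt_iff_nth_less)
    then show False using assms(5) by simp
  qed
  moreover have "a \<noteq> b" using assms(5) ab by auto
  ultimately show ?thesis using assms(2) ab by (auto simp: sorted_wrt_iff_nth_less)
qed

lemma sorted_wrt_less_map_neq:
  assumes "sorted_wrt (<) (map (f :: _ \<Rightarrow> 'b::linorder) p)" "i \<in> set p" "j \<in> set p" "i \<noteq> j"
  shows "f i \<noteq> f j"
proof -
  have "distinct (map f p)" using assms(1) by (simp add: strict_sorted_iff)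
  then show ?thesis using assms(2-4) by (auto simp: distinct_map inj_on_def)
qed

lemma finite_sets_separated:
  fixes A B :: "real set"
  assumes "finite A" "finite B" "\<And>a b. a \<in> A \<Longrightarrow> b \<in> B \<Longrightarrow> a < b"
  obtains t where "\<And>a. a \<in> A \<Longrightarrow> a < t" "\<And>b. b \<in> B \<Longrightarrow> t < b"
proof -
  define A' where "A' = insert (Min (insert 0 B) - 1) A"
  define B' where "B' = insert (Max A' + 1) B"
  have A': "finite A'" "A' \<noteq> {}" and B': "finite B'" "B' \<noteq> {}"
    using assms(1,2) unfolding A'_def B'_def by simp_all
  have below_B: "Min (insert 0 B) - 1 < b" if "b \<in> B" for b
  proof -
    have "Min (insert 0 B) \<le> b" by (rule Min_le) (use assms(2) that in auto)
    then show ?thesis by simp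
  qed
  have "a < b" if "a \<in> A'" "b \<in> B'" for a b
  proof (cases "b \<in> B")
    case True
    with that(1) show ?thesis using assms(3) below_B unfolding A'_def by auto
  next
    case False
    then have "b = Max A' + 1" using that(2) unfolding B'_def by simp
    then show ?thesis using Max_ge[OF A'(1) that(1)] by simp
  qed
  then have "Max A' < Min B'" using A' B' by simp
  moreover have "a \<le> Max A'" if "a \<in> A" for a using A'(1) that unfolding A'_def by simp
  moreover have "Min B' \<le> b" if "b \<in> B" for b using B'(1) that unfolding B'_def by simp
  ultimately show ?thesis
    by (intro that[of "(Max A' + Min B') / 2"]) fastforce+
qed

text \<open>The sign vector of a point with respect to the hyperplanes \<open>x\<^sub>i + x\<^sub>j = x\<^sub>k + x\<^sub>l\<close>.
  The quadruples \<open>(i, i, k, k)\<close> record the order of the coordinates themselves; mixed quadruples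
  such as \<open>(i, i, k, l)\<close> with \<open>k \<noteq> l\<close> are excluded, since \<open>2 x\<^sub>i = x\<^sub>k + x\<^sub>l\<close> is no hyperplane
  of the arrangement.\<close>

definition index_quads :: "nat \<Rightarrow> (nat \<times> nat \<times> nat \<times> nat) set" where
  "index_quads m = {(i, j, k, l). i \<in> {1..m} \<and> j \<in> {1..m} \<and> k \<in> {1..m} \<and> l \<in> {1..m}
     \<and> (i \<noteq> j \<and> k \<noteq> l \<or> i = j \<and> k = l)}"

definition sum_order :: "nat \<Rightarrow> (nat \<Rightarrow> real) \<Rightarrow> nat \<times> nat \<times> nat \<times> nat \<Rightarrow> bool" where
  "sum_order m x = (\<lambda>(i, j, k, l). (i, j, k, l) \<in> index_quads m \<and> x i + x j < x k + x l)"

lemma sum_order_diag: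
  "i \<in> {1..m} \<Longrightarrow> k \<in> {1..m} \<Longrightarrow> sum_order m x (i, i, k, k) \<longleftrightarrow> x i < x k"
  by (auto simp: sum_order_def index_quads_def)

lemma sum_order_pair:
  "i \<in> {1..m} \<Longrightarrow> j \<in> {1..m} \<Longrightarrow> k \<in> {1..m} \<Longrightarrow> l \<in> {1..m} \<Longrightarrow> i \<noteq> j \<Longrightarrow> k \<noteq> l \<Longrightarrow>
     sum_order m x (i, j, k, l) \<longleftrightarrow> x i + x j < x k + x l"
  by (auto simp: sum_order_def index_quads_def)

lemma sum_order_eq_cut:
  assumes "sum_order m x = sum_order m x'"
  obtains y' where
    "\<And>i j. i \<in> {1..m} \<Longrightarrow> j \<in> {1..m} \<Longrightarrow> i \<noteq> j \<Longrightarrow> x i + x j < 2 * y \<Longrightarrow> x' i + x' j < 2 * y'"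
    "\<And>i j. i \<in> {1..m} \<Longrightarrow> j \<in> {1..m} \<Longrightarrow> i \<noteq> j \<Longrightarrow> 2 * y < x i + x j \<Longrightarrow> 2 * y' < x' i + x' j"
proof -
  define P where "P = {(i, j). i \<in> {1..m} \<and> j \<in> {1..m} \<and> i \<noteq> j}"
  define A where "A = {x' i + x' j | i j. (i, j) \<in> P \<and> x i + x j < 2 * y}"
  define B where "B = {x' i + x' j | i j. (i, j) \<in> P \<and> 2 * y < x i + x j}"
  have "finite P" unfolding P_def by (rule finite_subset[of _ "{1..m} \<times> {1..m}"]) auto
  then have "finite A" "finite B"
    unfolding A_def B_def
    by (intro finite_subset[OF _ finite_imageI[OF \<open>finite P\<close>, of "\<lambda>(i, j). x' i + x' j"]];
        force)+
  moreover have "a < b" if a: "a \<in> A" and b: "b \<in> B" for a b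
  proof -
    obtain i j where ij: "(i, j) \<in> P" "x i + x j < 2 * y" "a = x' i + x' j"
      using a unfolding A_def by blast
    obtain k l where kl: "(k, l) \<in> P" "2 * y < x k + x l" "b = x' k + x' l"
      using b unfolding B_def by blast
    have "sum_order m x (i, j, k, l)" using ij kl by (auto simp: P_def sum_order_pair)
    then show ?thesis using assms ij kl by (auto simp: P_def sum_order_pair)
  qed
  ultimately obtain t where "\<And>a. a \<in> A \<Longrightarrow> a < t" "\<And>b. b \<in> B \<Longrightarrow> t < b"
    by (rule finite_sets_separated) blast+
  then show ?thesis
    by (intro that[of "t / 2"]) (fastforce simp: A_def B_def P_def)+
qed

lemma RP_UF_subset_if_sum_order_eq:
  assumes "3 \<le> m" "generic m x" "generic m x'" "sum_order m x = sum_order m x'"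
  shows "RP_UF m x \<subseteq> RP_UF m x'"
proof
  fix p assume "p \<in> RP_UF m x"
  then obtain y where y: "sorted_wrt (<) (map (\<lambda>i. \<bar>y - x i\<bar>) p)"
    and p: "p \<in> permutations_of_set {1..m}" unfolding RP_UF_def by auto
  have set_p: "set p = {1..m}" using p by (simp add: permutations_of_set_def)
  obtain y' where below: "\<And>i j. i \<in> {1..m} \<Longrightarrow> j \<in> {1..m} \<Longrightarrow> i \<noteq> j \<Longrightarrow>
      x i + x j < 2 * y \<Longrightarrow> x' i + x' j < 2 * y'"
    and above: "\<And>i j. i \<in> {1..m} \<Longrightarrow> j \<in> {1..m} \<Longrightarrow> i \<noteq> j \<Longrightarrow>
      2 * y < x i + x j \<Longrightarrow> 2 * y' < x' i + x' j"
    using sum_order_eq_cut[OF assms(4)] by metis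
  have "\<bar>y' - x' i\<bar> < \<bar>y' - x' j\<bar>"
    if ij: "i \<in> {1..m}" "j \<in> {1..m}" and closer: "\<bar>y - x i\<bar> < \<bar>y - x j\<bar>" for i j
  proof -
    have "i \<noteq> j" using closer by auto
    then have ne: "x i \<noteq> x j" "x' i \<noteq> x' j"
      using ij generic_inj_on[OF assms(2,1)] generic_inj_on[OF assms(3,1)] by (auto dest: inj_onD)
    have mid: "x i + x j \<noteq> 2 * y" using closer abs_diff_eq_imp_midpoint by fastforce
    have "x' i + x' j \<noteq> 2 * y'" "2 * y < x i + x j \<longleftrightarrow> 2 * y' < x' i + x' j"
      using below[OF ij \<open>i \<noteq> j\<close>] above[OF ij \<open>i \<noteq> j\<close>] mid by (smt (verit))+
    moreover have "x i < x j \<longleftrightarrow> x' i < x' j" using assms(4) ij sum_order_diag by metis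
    ultimately show ?thesis
      using closer abs_diff_less_iff[OF ne(1) mid] abs_diff_less_iff[OF ne(2)] by blast
  qed
  then have "sorted_wrt (<) (map (\<lambda>i. \<bar>y' - x' i\<bar>) p)"
    using y set_p unfolding sorted_wrt_map by (auto elim!: sorted_wrt_mono_rel[rotated])
  then show "p \<in> RP_UF m x'" using p unfolding RP_UF_def by blast
qed

lemma RP_UF_eq_if_sum_order_eq:
  assumes "3 \<le> m" "generic m x" "generic m x'" "sum_order m x = sum_order m x'"
  shows "RP_UF m x = RP_UF m x'"
  using RP_UF_subset_if_sum_order_eq[OF assms] RP_UF_subset_if_sum_order_eq[OF assms(1,3,2)]
    assms(4) by auto

lemma sorted_wrt_dist_sort_key:
  assumes "3 \<le> m" "generic m x"
    and mid: "\<And>i j. i \<in> {1..m} \<Longrightarrow> j \<in> {1..m} \<Longrightarrow> i \<noteq> j \<Longrightarrow> x i + x j \<noteq> 2 * y"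
  shows "sorted_wrt (<) (map (\<lambda>i. \<bar>y - x i\<bar>) (sort_key (\<lambda>i. \<bar>y - x i\<bar>) [1..<Suc m]))"
proof -
  have "inj_on (\<lambda>i. \<bar>y - x i\<bar>) {1..m}"
  proof (rule inj_onI, rule ccontr)
    fix i j assume ij: "i \<in> {1..m}" "j \<in> {1..m}" "\<bar>y - x i\<bar> = \<bar>y - x j\<bar>" "i \<noteq> j"
    then have "x i \<noteq> x j" using generic_inj_on[OF assms(2,1)] by (auto dest: inj_onD)
    then show False using ij mid abs_diff_eq_imp_midpoint by blast
  qed
  then show ?thesis
    unfolding strict_sorted_iff by (simp add: distinct_map atLeastLessThanSuc_atLeastAtMost del: upt_Suc)
qed

lemma midpoint_side_transfer:
  fixes x x' :: "nat \<Rightarrow> real"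
  assumes "sorted_wrt (<) (map (\<lambda>a. \<bar>y - x a\<bar>) p)" "sorted_wrt (<) (map (\<lambda>a. \<bar>y' - x' a\<bar>) p)"
    and "i \<in> set p" "j \<in> set p" "x i \<noteq> x j" "x' i \<noteq> x' j" "x i < x j \<longleftrightarrow> x' i < x' j"
  shows "2 * y < x i + x j \<longleftrightarrow> 2 * y' < x' i + x' j"
    and "x i + x j < 2 * y \<longleftrightarrow> x' i + x' j < 2 * y'"
proof -
  have "i \<noteq> j" using assms(5) by auto
  have mid: "x i + x j \<noteq> 2 * y" "x' i + x' j \<noteq> 2 * y'"
    using sorted_wrt_less_map_neq[OF assms(1,3,4) \<open>i \<noteq> j\<close>]
      sorted_wrt_less_map_neq[OF assms(2,3,4) \<open>i \<noteq> j\<close>] by (smt (verit))+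
  have "\<bar>y - x i\<bar> < \<bar>y - x j\<bar> \<longleftrightarrow> \<bar>y' - x' i\<bar> < \<bar>y' - x' j\<bar>"
    using sorted_wrt_less_map_transfer[OF assms(1,2,3,4)]
      sorted_wrt_less_map_transfer[OF assms(2,1,3,4)] by blast
  then show "2 * y < x i + x j \<longleftrightarrow> 2 * y' < x' i + x' j"
    using abs_diff_less_iff[OF assms(5) mid(1)] abs_diff_less_iff[OF assms(6) mid(2)] assms(7)
    by blast
  then show "x i + x j < 2 * y \<longleftrightarrow> x' i + x' j < 2 * y'"
    using mid by linarith
qed

lemma exists_midpoint_off_pair_sums:
  fixes x :: "nat \<Rightarrow> real"
  assumes "s < s'"
  obtains y where "s < 2 * y" "2 * y < s'" "\<And>a b. a \<in> {1..m} \<Longrightarrow> b \<in> {1..m} \<Longrightarrow> x a + x b \<noteq> 2 * y"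
proof -
  define F where "F = (\<lambda>(a, b). x a + x b) ` ({1..m} \<times> {1..m})"
  have "infinite ({s<..<s'} - F)" using assms unfolding F_def by (simp add: Diff_infinite_finite)
  then obtain t where "s < t" "t < s'" "t \<notin> F"
    by (metis Diff_iff greaterThanLessThan_iff finite.emptyI ex_in_conv)
  then show ?thesis by (intro that[of "t / 2"]) (force simp: F_def)+
qed

lemma sum_order_mono_if_RP_UF_subset:
  assumes "3 \<le> m" "generic m x" "generic m x'"
    and ord: "\<And>a b. a \<in> {1..m} \<Longrightarrow> b \<in> {1..m} \<Longrightarrow> x a < x b \<longleftrightarrow> x' a < x' b"
    and RP: "RP_UF m x \<subseteq> RP_UF m x'" and q: "sum_order m x (i, j, k, l)"
  shows "sum_order m x' (i, j, k, l)"
proof -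
  have Q: "(i, j, k, l) \<in> index_quads m" and lt: "x i + x j < x k + x l"
    using q by (auto simp: sum_order_def)
  then have rng: "i \<in> {1..m}" "j \<in> {1..m}" "k \<in> {1..m}" "l \<in> {1..m}"
    by (auto simp: index_quads_def)
  show ?thesis
  proof (cases "i = j")
    case True
    then have "k = l" using Q by (auto simp: index_quads_def)
    then show ?thesis using q ord rng True by (simp add: sum_order_diag)
  next
    case False
    then have "k \<noteq> l" using Q by (auto simp: index_quads_def)
    obtain y where t: "x i + x j < 2 * y" "2 * y < x k + x l"
      and off: "\<And>a b. a \<in> {1..m} \<Longrightarrow> b \<in> {1..m} \<Longrightarrow> x a + x b \<noteq> 2 * y"
      using exists_midpoint_off_pair_sums[where m = m and x = x, OF lt] by blast
    define p where "p = sort_key (\<lambda>a. \<bar>y - x a\<bar>) [1..<Suc m]"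
    have y: "sorted_wrt (<) (map (\<lambda>a. \<bar>y - x a\<bar>) p)"
      unfolding p_def using off by (intro sorted_wrt_dist_sort_key[OF assms(1,2)]) blast
    have set_p: "set p = {1..m}" and "distinct p" unfolding p_def by auto
    then have "p \<in> RP_UF m x" using y unfolding RP_UF_def permutations_of_set_def by auto
    then obtain y' where y': "sorted_wrt (<) (map (\<lambda>a. \<bar>y' - x' a\<bar>) p)"
      using RP unfolding RP_UF_def by blast
    have side: "2 * y < x a + x b \<longleftrightarrow> 2 * y' < x' a + x' b"
      "x a + x b < 2 * y \<longleftrightarrow> x' a + x' b < 2 * y'"
      if "a \<in> {1..m}" "b \<in> {1..m}" "a \<noteq> b" for a b
    proof -
      have "x a \<noteq> x b" "x' a \<noteq> x' b"
        using that generic_inj_on[OF assms(2,1)] generic_inj_on[OF assms(3,1)] by (auto dest: inj_onD)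
      then show "2 * y < x a + x b \<longleftrightarrow> 2 * y' < x' a + x' b"
        "x a + x b < 2 * y \<longleftrightarrow> x' a + x' b < 2 * y'"
        using midpoint_side_transfer[OF y y' _ _ _ _ ord[OF that(1,2)]] that(1,2) set_p by auto
    qed
    have "x' i + x' j < x' k + x' l"
      using side[OF rng(1,2) False] side[OF rng(3,4) \<open>k \<noteq> l\<close>] t by simp
    then show ?thesis using rng False \<open>k \<noteq> l\<close> by (simp add: sum_order_pair)
  qed
qed

lemma sum_order_eq_if_RP_UF_eq:
  assumes "3 \<le> m" "generic m x" "generic m x'"
    and "\<And>a b. a \<in> {1..m} \<Longrightarrow> b \<in> {1..m} \<Longrightarrow> x a < x b \<longleftrightarrow> x' a < x' b"
    and "RP_UF m x = RP_UF m x'"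
  shows "sum_order m x = sum_order m x'"
proof
  fix q :: "nat \<times> nat \<times> nat \<times> nat"
  obtain i j k l where q: "q = (i, j, k, l)" by (cases q)
  have ord': "x' a < x' b \<longleftrightarrow> x a < x b" if "a \<in> {1..m}" "b \<in> {1..m}" for a b
    using assms(4)[OF that] by blast
  show "sum_order m x q = sum_order m x' q"
    using sum_order_mono_if_RP_UF_subset[OF assms(1-4), of i j k l]
      sum_order_mono_if_RP_UF_subset[OF assms(1,3,2) ord', of i j k l] assms(5)
    unfolding q by blast
qed

section \<open>Chambers of the mid-hyperplane arrangement\<close>

definition generic_points :: "nat \<Rightarrow> (nat \<Rightarrow> real) set" where
  "generic_points m = {x. generic m x}"

lemma generic_notin_mid_arr:
  assumes "3 \<le> m" "generic m x" "H \<in> mid_arr m"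
  shows "x \<notin> H"
proof -
  from assms(3) consider (braid) i j where "1 \<le> i" "i < j" "j \<le> m" "H = {x \<in> Rm m. x i = x j}"
    | (mid) i j k l where "distinct [i, j, k, l]" "1 \<le> i" "i < j" "j \<le> m" "i < k" "k < l" "l \<le> m"
        "H = {x \<in> Rm m. x i + x j = x k + x l}"
    unfolding mid_arr_def braid_arr_def by blast
  then show ?thesis
  proof cases
    case braid
    then show ?thesis using generic_inj_on[OF assms(2,1)] by (auto dest: inj_onD)
  next
    case mid
    then have "x i + x j \<noteq> x k + x l"
      by (intro generic_sum_neq[OF assms(2)]) (auto simp: doubleton_eq_iff)
    then show ?thesis using mid by auto
  qed
qed

lemma avoids_braid_arr_inj_on:
  assumes "x \<in> Rm m" "x \<notin> \<Union>(braid_arr m)"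
  shows "inj_on x {1..m}"
proof (rule inj_onI, rule ccontr)
  fix i j assume ij: "i \<in> {1..m}" "j \<in> {1..m}" "x i = x j" "i \<noteq> j"
  then have "1 \<le> min i j" "min i j < max i j" "max i j \<le> m" by auto
  then have "{y \<in> Rm m. y (min i j) = y (max i j)} \<in> braid_arr m"
    unfolding braid_arr_def by blast
  then have "x (min i j) \<noteq> x (max i j)" using assms by blast
  then show False using ij(3) by (auto simp: min_def max_def split: if_splits)
qed

lemma avoids_mid_arr_sum_neq:
  assumes "x \<in> Rm m" "x \<notin> \<Union>(mid_arr m)" "distinct [i, j, k, l]" "{i, j, k, l} \<subseteq> {1..m}"
  shows "x i + x j \<noteq> x k + x l"
proof -
  have normal: "x a + x b \<noteq> x c + x d"
    if "distinct [a, b, c, d]" "{a, b, c, d} \<subseteq> {1..m}" "a < b" "c < d" "a < c" for a b c d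
  proof -
    have "{y \<in> Rm m. y a + y b = y c + y d} \<in> mid_arr m"
      unfolding mid_arr_def
      by (rule UnI2, rule CollectI, rule exI[of _ a], rule exI[of _ b], rule exI[of _ c],
          rule exI[of _ d]) (use that in simp)
    then show ?thesis using assms(1,2) by blast
  qed
  define a b c d where "a = min i j" and "b = max i j" and "c = min k l" and "d = max k l"
  have sums: "x i + x j = x a + x b" "x k + x l = x c + x d"
    unfolding a_def b_def c_def d_def by (simp_all add: min_def max_def)
  have abcd: "distinct [a, b, c, d]" "{a, b, c, d} \<subseteq> {1..m}" "a < b" "c < d"
    using assms(3,4) unfolding a_def b_def c_def d_def by (auto simp: min_def max_def)
  show ?thesis
  proof (cases "a < c")
    case True
    then show ?thesis using normal[OF abcd] sums by simp
  next
    case False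
    then have "c < a" using abcd(1) by auto
    moreover have "distinct [c, d, a, b]" "{c, d, a, b} \<subseteq> {1..m}" using abcd(1,2) by auto
    ultimately show ?thesis using normal[of c d a b] abcd(3,4) sums by fastforce
  qed
qed

lemma Rm_minus_mid_arr:
  assumes "3 \<le> m"
  shows "Rm m - \<Union>(mid_arr m) = generic_points m"
proof (intro equalityI subsetI)
  fix x assume x: "x \<in> Rm m - \<Union>(mid_arr m)"
  then have inj: "inj_on x {1..m}"
    by (intro avoids_braid_arr_inj_on) (auto simp: mid_arr_def)
  have "generic m x"
  proof (rule genericI)
    show "x \<in> Rm m" using x by blast
    fix i j k l
    assume ijkl: "i \<in> {1..m}" "j \<in> {1..m}" "k \<in> {1..m}" "l \<in> {1..m}" "i \<noteq> j" "k \<noteq> l"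
      and pairs: "{i, j} \<noteq> {k, l}"
    show "x i + x j \<noteq> x k + x l"
    proof (cases "distinct [i, j, k, l]")
      case True
      then show ?thesis using avoids_mid_arr_sum_neq x ijkl(1-4) by auto
    next
      case False
      then consider "i = k" "j \<noteq> l" | "i = l" "j \<noteq> k" | "j = k" "i \<noteq> l" | "j = l" "i \<noteq> k"
        using ijkl(5,6) pairs by (auto simp: doubleton_eq_iff)
      then show ?thesis using inj ijkl(1-4) by cases (auto dest: inj_onD)
    qed
  qed
  then show "x \<in> generic_points m" unfolding generic_points_def by simp
next
  fix x assume "x \<in> generic_points m"
  then have "generic m x" by (simp add: generic_points_def)
  moreover from this have "x \<in> Rm m" unfolding generic_def by blast
  ultimately show "x \<in> Rm m - \<Union>(mid_arr m)" using generic_notin_mid_arr[OF assms] by blast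
qed

lemma connected_sign_const:
  fixes f :: "'a::topological_space \<Rightarrow> real"
  assumes "connected S" "continuous_on S f" "\<And>v. v \<in> S \<Longrightarrow> f v \<noteq> 0" "v \<in> S" "w \<in> S"
  shows "f v < 0 \<longleftrightarrow> f w < 0"
proof -
  have interval: "c \<in> f ` S" if "a \<in> f ` S" "b \<in> f ` S" "a \<le> c" "c \<le> b" for a b c
    using connected_continuous_image[OF assms(2,1)] that unfolding connected_iff_interval by blast
  have "0 \<notin> f ` S" using assms(3) by auto
  then show ?thesis using interval[of "f v" "f w" 0] interval[of "f w" "f v" 0] assms(4,5) by force
qed

lemma generic_sum_neq_quad:
  assumes "3 \<le> m" "generic m v" "(i, j, k, l) \<in> index_quads m" "{i, j} \<noteq> {k, l}"
  shows "v i + v j \<noteq> v k + v l"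
proof (cases "i = j")
  case True
  then have "k = l" "i \<noteq> k" using assms(3,4) by (auto simp: index_quads_def)
  then show ?thesis
    using True assms(3) generic_inj_on[OF assms(2,1)] by (auto simp: index_quads_def dest: inj_onD)
next
  case False
  then show ?thesis
    using assms(3,4) by (intro generic_sum_neq[OF assms(2)]) (auto simp: index_quads_def)
qed

lemma sum_order_eq_on_connected:
  assumes "3 \<le> m" "connected S" "S \<subseteq> generic_points m" "v \<in> S" "w \<in> S"
  shows "sum_order m v = sum_order m w"
proof
  fix q :: "nat \<times> nat \<times> nat \<times> nat"
  obtain i j k l where q: "q = (i, j, k, l)" by (cases q)
  show "sum_order m v q = sum_order m w q"
  proof (cases "q \<in> index_quads m \<and> {i, j} \<noteq> {k, l}")
    case False
    then show ?thesis unfolding q by (auto simp: sum_order_def doubleton_eq_iff)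
  next
    case True
    define f where "f u = u i + u j - (u k + u l)" for u :: "nat \<Rightarrow> real"
    have coord: "continuous_on S (\<lambda>u::nat \<Rightarrow> real. u a)" for a
      by (rule continuous_on_subset[OF continuous_on_product_coordinates]) simp
    have "continuous_on S f" unfolding f_def by (intro continuous_on_diff continuous_on_add coord)
    moreover have "f u \<noteq> 0" if "u \<in> S" for u
      using generic_sum_neq_quad[OF assms(1), of u i j k l] True assms(3) that
      unfolding f_def q generic_points_def by auto
    moreover have "sum_order m u q \<longleftrightarrow> f u < 0" for u
      using True unfolding q sum_order_def f_def by auto
    ultimately show ?thesis using connected_sign_const[OF assms(2)] assms(4,5) by blast
  qed
qed

lemma convex_comb_strict_less:
  fixes a b c d t :: real
  assumes "a < c" "b < d" "0 \<le> t" "t \<le> 1"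
  shows "(1 - t) * a + t * b < (1 - t) * c + t * d"
proof (cases "t = 1")
  case False
  then have "(1 - t) * a < (1 - t) * c" using assms by simp
  moreover have "t * b \<le> t * d" using assms by (simp add: mult_left_mono)
  ultimately show ?thesis by simp
qed (use assms in simp)

lemma generic_convex_comb:
  assumes "generic m x" "generic m w" "sum_order m x = sum_order m w" "0 \<le> t" "t \<le> 1"
  shows "generic m (\<lambda>i. (1 - t) * x i + t * w i)"
proof -
  define z where "z i = (1 - t) * x i + t * w i" for i
  have "generic m z"
  proof (rule genericI)
    show "z \<in> Rm m" using assms(1,2) unfolding z_def generic_def Rm_def by simp
    fix i j k l
    assume ijkl: "i \<in> {1..m}" "j \<in> {1..m}" "k \<in> {1..m}" "l \<in> {1..m}" "i \<noteq> j" "k \<noteq> l"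
      and pairs: "{i, j} \<noteq> {k, l}"
    have "x i + x j \<noteq> x k + x l" "w i + w j \<noteq> w k + w l"
      using generic_sum_neq[OF assms(1) ijkl pairs] generic_sum_neq[OF assms(2) ijkl pairs] .
    moreover have "x i + x j < x k + x l \<longleftrightarrow> w i + w j < w k + w l"
      "x k + x l < x i + x j \<longleftrightarrow> w k + w l < w i + w j"
      using assms(3) ijkl by (metis sum_order_pair)+
    ultimately consider "x i + x j < x k + x l" "w i + w j < w k + w l"
      | "x k + x l < x i + x j" "w k + w l < w i + w j" by linarith
    then show "z i + z j \<noteq> z k + z l"
    proof cases
      case 1
      then have "(1 - t) * (x i + x j) + t * (w i + w j) < (1 - t) * (x k + x l) + t * (w k + w l)"
        using convex_comb_strict_less assms(4,5) by blast
      then show ?thesis unfolding z_def by (simp add: algebra_simps)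
    next
      case 2
      then have "(1 - t) * (x k + x l) + t * (w k + w l) < (1 - t) * (x i + x j) + t * (w i + w j)"
        using convex_comb_strict_less assms(4,5) by blast
      then show ?thesis unfolding z_def by (simp add: algebra_simps)
    qed
  qed
  then show ?thesis unfolding z_def by simp
qed

lemma connected_component_generic_points:
  assumes "3 \<le> m" "x \<in> generic_points m"
  shows "connected_component_set (generic_points m) x
    = {w \<in> generic_points m. sum_order m w = sum_order m x}"
proof (intro equalityI subsetI)
  fix w assume w: "w \<in> connected_component_set (generic_points m) x"
  have "x \<in> connected_component_set (generic_points m) x" using assms(2) by simp
  then have "sum_order m w = sum_order m x"
    using sum_order_eq_on_connected[OF assms(1) _ connected_component_subset w] by simp
  then show "w \<in> {w \<in> generic_points m. sum_order m w = sum_order m x}"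
    using connected_component_subset w by blast
next
  fix w assume w: "w \<in> {w \<in> generic_points m. sum_order m w = sum_order m x}"
  define g where "g t = (\<lambda>i. (1 - t) * x i + t * w i)" for t :: real
  have "continuous_on {0..1} g" unfolding g_def
    by (intro continuous_on_coordinatewise_then_product continuous_intros)
  then have "connected (g ` {0..1})" by (rule connected_continuous_image) simp
  moreover have "g ` {0..1} \<subseteq> generic_points m"
    using generic_convex_comb w assms(2) unfolding g_def generic_points_def by auto
  moreover have "x \<in> g ` {0..1}" "w \<in> g ` {0..1}"
    by (force simp: g_def intro: image_eqI[of _ _ 0] image_eqI[of _ _ 1])+
  ultimately show "w \<in> connected_component_set (generic_points m) x"
    by (simp add: connected_componentI)
qed

lemma card_image_eq_if_same_fibres:
  assumes "\<And>x y. x \<in> A \<Longrightarrow> y \<in> A \<Longrightarrow> f x = f y \<longleftrightarrow> g x = g y"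
  shows "card (f ` A) = card (g ` A)"
proof -
  define h where "h u = g (inv_into A f u)" for u
  have hf: "h (f a) = g a" if "a \<in> A" for a
  proof -
    have "inv_into A f (f a) \<in> A" "f (inv_into A f (f a)) = f a"
      using that by (auto intro: inv_into_into f_inv_into_f)
    then show ?thesis unfolding h_def using assms[OF _ that] by simp
  qed
  have "inj_on h (f ` A)"
  proof (rule inj_onI)
    fix u v assume "u \<in> f ` A" "v \<in> f ` A" "h u = h v"
    then obtain a b where "a \<in> A" "b \<in> A" "u = f a" "v = f b" "g a = g b"
      using hf by (metis imageE)
    then show "u = v" using assms by simp
  qed
  moreover have "h ` f ` A = g ` A" using hf by (simp add: image_image cong: image_cong)
  ultimately show ?thesis by (metis card_image)
qed
lemma card_chambers_mid_arr:
  assumes "3 \<le> m"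
  shows "card (chambers m (mid_arr m)) = card (sum_order m ` generic_points m)"
proof -
  define K where "K x = {w \<in> generic_points m. sum_order m w = sum_order m x}" for x
  have "chambers m (mid_arr m) = (connected_component_set (generic_points m)) ` generic_points m"
    unfolding chambers_def Rm_minus_mid_arr[OF assms] by blast
  also have "\<dots> = K ` generic_points m"
    using connected_component_generic_points[OF assms] unfolding K_def by (rule image_cong[OF refl])
  finally have "card (chambers m (mid_arr m)) = card (K ` generic_points m)" by simp
  also have "\<dots> = card (sum_order m ` generic_points m)"
  proof (rule card_image_eq_if_same_fibres)
    fix x y assume "x \<in> generic_points m"
    show "K x = K y \<longleftrightarrow> sum_order m x = sum_order m y"
    proof
      assume "K x = K y"
      then have "x \<in> K y" using \<open>x \<in> generic_points m\<close> by (auto simp: K_def)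
      then show "sum_order m x = sum_order m y" by (simp add: K_def)
    qed (simp add: K_def)
  qed
  finally show ?thesis .
qed

section \<open>Sorting the coordinates\<close>

definition coords_increasing :: "nat \<Rightarrow> (nat \<Rightarrow> real) \<Rightarrow> bool" where
  "coords_increasing m x \<longleftrightarrow> (\<forall>i. 1 \<le> i \<and> i < m \<longrightarrow> x i < x (Suc i))"

definition sorted_generic_points :: "nat \<Rightarrow> (nat \<Rightarrow> real) set" where
  "sorted_generic_points m = {x. generic m x \<and> coords_increasing m x}"

lemma coords_increasing_less:
  assumes "coords_increasing m x" "1 \<le> a" "a < b" "b \<le> m"
  shows "x a < x b"
  using assms(3,4)
proof (induction b)
  case (Suc b)
  then have "x b < x (Suc b)" using assms(1,2) unfolding coords_increasing_def by auto
  then show ?case using Suc by (cases "a = b") auto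
qed simp

lemma coords_increasing_less_iff:
  assumes "coords_increasing m x" "a \<in> {1..m}" "b \<in> {1..m}"
  shows "x a < x b \<longleftrightarrow> a < b"
  using coords_increasing_less[OF assms(1), of a b] coords_increasing_less[OF assms(1), of b a]
    assms(2,3) by (cases a b rule: linorder_cases) auto

lemma strict_mono_on_self_eq:
  fixes \<sigma> :: "nat \<Rightarrow> nat"
  assumes mono: "strict_mono_on {1..m} \<sigma>" and into: "\<sigma> ` {1..m} \<subseteq> {1..m}" and a: "a \<in> {1..m}"
  shows "\<sigma> a = a"
proof -
  have inj: "inj_on \<sigma> {1..m}" using mono by (rule strict_mono_on_imp_inj_on)
  have "\<sigma> i \<in> {1..\<sigma> a}" if "i \<in> {1..a}" for i
  proof -
    have "i \<in> {1..m}" using that a by simp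
    then have "\<sigma> i \<in> {1..m}" using into by blast
    then show ?thesis using strict_mono_on_leD[OF mono \<open>i \<in> {1..m}\<close> a] that by auto
  qed
  then have "card {1..a} \<le> card {1..\<sigma> a}"
    using a by (intro card_inj_on_le[OF inj_on_subset[OF inj]]) auto
  moreover have "\<sigma> i \<in> {\<sigma> a..m}" if "i \<in> {a..m}" for i
  proof -
    have "i \<in> {1..m}" using that a by simp
    then have "\<sigma> i \<in> {1..m}" using into by blast
    then show ?thesis using strict_mono_on_leD[OF mono a \<open>i \<in> {1..m}\<close>] that by auto
  qed
  then have "card {a..m} \<le> card {\<sigma> a..m}"
    using a by (intro card_inj_on_le[OF inj_on_subset[OF inj]]) auto
  moreover have "\<sigma> a \<in> {1..m}" using into a by blast
  ultimately show ?thesis using a by simp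
qed

lemma generic_comp_permutes:
  assumes "generic m z" "r permutes {1..m}"
  shows "generic m (z \<circ> r)"
proof (rule genericI)
  show "z \<circ> r \<in> Rm m"
    using assms unfolding generic_def Rm_def by (auto simp: permutes_not_in)
  fix i j k l
  assume ijkl: "i \<in> {1..m}" "j \<in> {1..m}" "k \<in> {1..m}" "l \<in> {1..m}" "i \<noteq> j" "k \<noteq> l"
    and pairs: "{i, j} \<noteq> {k, l}"
  have inj: "inj r" using assms(2) by (rule permutes_inj)
  have "{r i, r j} \<noteq> {r k, r l}"
    using pairs inj_image_eq_iff[OF inj, of "{i, j}" "{k, l}"] by simp
  moreover have "r i \<noteq> r j" "r k \<noteq> r l" using ijkl(5,6) inj by (auto dest: injD)
  ultimately show "(z \<circ> r) i + (z \<circ> r) j \<noteq> (z \<circ> r) k + (z \<circ> r) l"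
    using generic_sum_neq[OF assms(1)] ijkl(1-4) permutes_in_image[OF assms(2)] by simp
qed

definition coord_rank :: "nat \<Rightarrow> (nat \<Rightarrow> real) \<Rightarrow> nat \<Rightarrow> nat" where
  "coord_rank m x a = (if a \<in> {1..m} then card {b \<in> {1..m}. x b \<le> x a} else a)"

lemma coord_rank_less:
  assumes "a \<in> {1..m}" "b \<in> {1..m}" "x a < x b"
  shows "coord_rank m x a < coord_rank m x b"
proof -
  have "{c \<in> {1..m}. x c \<le> x a} \<subseteq> {c \<in> {1..m}. x c \<le> x b}" using assms(3) by auto
  moreover have "b \<notin> {c \<in> {1..m}. x c \<le> x a}" "b \<in> {c \<in> {1..m}. x c \<le> x b}"
    using assms by auto
  ultimately have "{c \<in> {1..m}. x c \<le> x a} \<subset> {c \<in> {1..m}. x c \<le> x b}" by blast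
  then show ?thesis using assms(1,2) unfolding coord_rank_def by (simp add: psubset_card_mono)
qed

lemma coord_rank_permutes:
  assumes "generic m x" "3 \<le> m"
  shows "coord_rank m x permutes {1..m}"
proof (rule bij_imp_permutes)
  have into: "coord_rank m x a \<in> {1..m}" if "a \<in> {1..m}" for a
  proof -
    have "a \<in> {b \<in> {1..m}. x b \<le> x a}" using that by simp
    then have "0 < card {b \<in> {1..m}. x b \<le> x a}" by (auto simp: card_gt_0_iff)
    moreover have "card {b \<in> {1..m}. x b \<le> x a} \<le> card {1..m}" by (rule card_mono) auto
    ultimately show ?thesis using that unfolding coord_rank_def by auto
  qed
  have inj: "inj_on (coord_rank m x) {1..m}"
  proof (rule inj_onI, rule ccontr)
    fix a b assume ab: "a \<in> {1..m}" "b \<in> {1..m}" "coord_rank m x a = coord_rank m x b" "a \<noteq> b"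
    then have "x a \<noteq> x b" using generic_inj_on[OF assms] by (auto dest: inj_onD)
    then show False using coord_rank_less[of a m b x] coord_rank_less[of b m a x] ab by linarith
  qed
  have "coord_rank m x ` {1..m} = {1..m}"
    using into by (intro endo_inj_surj[OF _ _ inj]) auto
  then show "bij_betw (coord_rank m x) {1..m} {1..m}" using inj by (simp add: bij_betw_def)
qed (auto simp: coord_rank_def)

lemma generic_sorted_decomposition:
  assumes "generic m x" "3 \<le> m"
  obtains r z where "r permutes {1..m}" "z \<in> sorted_generic_points m" "x = z \<circ> r"
proof -
  define r where "r = coord_rank m x"
  have r: "r permutes {1..m}" unfolding r_def using coord_rank_permutes[OF assms] .
  have r_inv: "inv r permutes {1..m}" using r by (rule permutes_inv)
  define z where "z = x \<circ> inv r"
  have "x = z \<circ> r" unfolding z_def by (simp add: comp_assoc permutes_inv_o[OF r])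
  moreover have "coords_increasing m z" unfolding coords_increasing_def
  proof (intro allI impI)
    fix i assume i: "1 \<le> i \<and> i < m"
    define b c where "b = inv r i" and "c = inv r (Suc i)"
    have bc: "b \<in> {1..m}" "c \<in> {1..m}"
      using i permutes_in_image[OF r_inv] unfolding b_def c_def by auto
    have "r b = i" "r c = Suc i" unfolding b_def c_def by (simp_all add: permutes_inverses[OF r])
    then have "x b \<noteq> x c" "\<not> x c < x b"
      using generic_inj_on[OF assms] bc coord_rank_less[OF bc(2,1), of x] unfolding r_def
      by (auto dest: inj_onD)
    then show "z i < z (Suc i)" unfolding z_def b_def c_def by simp
  qed
  moreover have "generic m z" unfolding z_def by (rule generic_comp_permutes[OF assms(1) r_inv])
  ultimately show ?thesis using r that unfolding sorted_generic_points_def by blast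
qed

lemma permutes_eq_if_same_order:
  fixes r r' :: "nat \<Rightarrow> nat"
  assumes r: "r permutes {1..m}" and r': "r' permutes {1..m}"
    and ord: "\<And>a b. a \<in> {1..m} \<Longrightarrow> b \<in> {1..m} \<Longrightarrow> r a < r b \<longleftrightarrow> r' a < r' b"
  shows "r = r'"
proof
  have r_inv: "inv r permutes {1..m}" using r by (rule permutes_inv)
  have mono: "strict_mono_on {1..m} (r' \<circ> inv r)"
  proof (rule strict_mono_onI)
    fix u v assume uv: "u \<in> {1..m}" "v \<in> {1..m}" "u < v"
    then have "r (inv r u) < r (inv r v)" by (simp add: permutes_inverses[OF r])
    then show "(r' \<circ> inv r) u < (r' \<circ> inv r) v"
      using ord uv permutes_in_image[OF r_inv] by simp
  qed
  have into: "(r' \<circ> inv r) ` {1..m} \<subseteq> {1..m}"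
    using permutes_image[OF permutes_compose[OF r_inv r']] by simp
  fix a
  show "r a = r' a"
  proof (cases "a \<in> {1..m}")
    case True
    then have "r a \<in> {1..m}" by (simp only: permutes_in_image[OF r])
    from strict_mono_on_self_eq[OF mono into this] show ?thesis
      by (simp add: permutes_inverses[OF r])
  next
    case False
    then show ?thesis by (simp add: permutes_not_in[OF r] permutes_not_in[OF r'])
  qed
qed

definition relabel :: "(nat \<Rightarrow> nat) \<Rightarrow> (nat \<times> nat \<times> nat \<times> nat \<Rightarrow> bool) \<Rightarrow> nat \<times> nat \<times> nat \<times> nat \<Rightarrow> bool"
  where "relabel r s = (\<lambda>(i, j, k, l). s (r i, r j, r k, r l))"

lemma index_quads_permutes:
  assumes "r permutes {1..m}"
  shows "(r i, r j, r k, r l) \<in> index_quads m \<longleftrightarrow> (i, j, k, l) \<in> index_quads m"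
proof -
  have "r a \<in> {1..m} \<longleftrightarrow> a \<in> {1..m}" for a using permutes_in_image[OF assms] .
  moreover have "r a = r b \<longleftrightarrow> a = b" for a b using permutes_inj[OF assms] by (rule inj_eq)
  ultimately show ?thesis by (simp only: index_quads_def mem_Collect_eq prod.case)
qed

lemma sum_order_comp_permutes:
  assumes "r permutes {1..m}"
  shows "sum_order m (z \<circ> r) = relabel r (sum_order m z)"
proof
  fix q :: "nat \<times> nat \<times> nat \<times> nat"
  obtain i j k l where "q = (i, j, k, l)" by (cases q)
  then show "sum_order m (z \<circ> r) q = relabel r (sum_order m z) q"
    using index_quads_permutes[OF assms, of i j k l] unfolding sum_order_def relabel_def by simp
qed

lemma relabel_sum_order_diag:
  assumes "r permutes {1..m}" "coords_increasing m z" "a \<in> {1..m}" "b \<in> {1..m}"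
  shows "relabel r (sum_order m z) (a, a, b, b) \<longleftrightarrow> r a < r b"
  using permutes_in_image[OF assms(1)] assms(3,4)
  by (simp add: relabel_def sum_order_diag coords_increasing_less_iff[OF assms(2)])

lemma relabel_sum_order_inj:
  fixes r r' :: "nat \<Rightarrow> nat"
  assumes r: "r permutes {1..m}" and r': "r' permutes {1..m}"
    and z: "coords_increasing m z" and z': "coords_increasing m z'"
    and eq: "relabel r (sum_order m z) = relabel r' (sum_order m z')"
  shows "r = r'" and "sum_order m z = sum_order m z'"
proof -
  show "r = r'"
  proof (rule permutes_eq_if_same_order[OF r r'])
    fix a b assume ab: "a \<in> {1..m}" "b \<in> {1..m}"
    show "r a < r b \<longleftrightarrow> r' a < r' b"
      using relabel_sum_order_diag[OF r z ab] relabel_sum_order_diag[OF r' z' ab] eq by simp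
  qed
  show "sum_order m z = sum_order m z'"
  proof
    fix q :: "nat \<times> nat \<times> nat \<times> nat"
    obtain i j k l where q: "q = (i, j, k, l)" by (cases q)
    have "sum_order m w q = relabel r (sum_order m w) (inv r i, inv r j, inv r k, inv r l)" for w
      unfolding relabel_def q by (simp add: permutes_inverses[OF r])
    then show "sum_order m z q = sum_order m z' q" using eq \<open>r = r'\<close> by simp
  qed
qed

lemma card_sum_order_generic_points:
  assumes "3 \<le> m"
  shows "card (sum_order m ` generic_points m) = fact m * card (sum_order m ` sorted_generic_points m)"
proof -
  define P where "P = {r. r permutes {1..m}}"
  define S where "S = sum_order m ` sorted_generic_points m"
  have "sum_order m ` generic_points m = (\<lambda>(r, s). relabel r s) ` (P \<times> S)"
  proof (intro equalityI subsetI)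
    fix s assume "s \<in> sum_order m ` generic_points m"
    then obtain x where x: "generic m x" "s = sum_order m x" unfolding generic_points_def by auto
    obtain r z where "r permutes {1..m}" "z \<in> sorted_generic_points m" "x = z \<circ> r"
      using generic_sorted_decomposition[OF x(1) assms] .
    then show "s \<in> (\<lambda>(r, s). relabel r s) ` (P \<times> S)"
      unfolding P_def S_def x(2) by (force simp: sum_order_comp_permutes)
  next
    fix s assume "s \<in> (\<lambda>(r, s). relabel r s) ` (P \<times> S)"
    then obtain r z where "r permutes {1..m}" "generic m z" "s = relabel r (sum_order m z)"
      unfolding P_def S_def sorted_generic_points_def by auto
    then show "s \<in> sum_order m ` generic_points m"
      unfolding generic_points_def
      by (metis generic_comp_permutes image_eqI mem_Collect_eq sum_order_comp_permutes)
  qed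
  moreover have "inj_on (\<lambda>(r, s). relabel r s) (P \<times> S)"
  proof (rule inj_onI)
    fix u v assume u: "u \<in> P \<times> S" and v: "v \<in> P \<times> S"
      and eq: "(\<lambda>(r, s). relabel r s) u = (\<lambda>(r, s). relabel r s) v"
    obtain r z where ru: "u = (r, sum_order m z)" "r permutes {1..m}" "coords_increasing m z"
      using u unfolding P_def S_def sorted_generic_points_def by auto
    obtain r' z' where rv: "v = (r', sum_order m z')" "r' permutes {1..m}" "coords_increasing m z'"
      using v unfolding P_def S_def sorted_generic_points_def by auto
    have "relabel r (sum_order m z) = relabel r' (sum_order m z')" using eq ru(1) rv(1) by simp
    then show "u = v" using relabel_sum_order_inj[OF ru(2) rv(2) ru(3) rv(3)] ru(1) rv(1) by simp
  qed
  moreover have "card P = fact m" unfolding P_def by (rule card_permutations) simp_all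
  ultimately show ?thesis unfolding S_def by (simp add: card_image card_cartesian_product)
qed

lemma r0_eq_card_RP_UF: "r0 m = card (RP_UF m ` sorted_generic_points m)"
  unfolding r0_def sorted_generic_points_def coords_increasing_def by (simp add: setcompr_eq_image)

lemma r0_eq_card_sum_order:
  assumes "3 \<le> m"
  shows "r0 m = card (sum_order m ` sorted_generic_points m)"
proof -
  have "r0 m = card (RP_UF m ` sorted_generic_points m)" by (rule r0_eq_card_RP_UF)
  also have "\<dots> = card (sum_order m ` sorted_generic_points m)"
  proof (rule card_image_eq_if_same_fibres)
    fix x y assume "x \<in> sorted_generic_points m" "y \<in> sorted_generic_points m"
    then have x: "generic m x" "coords_increasing m x" and y: "generic m y" "coords_increasing m y"
      unfolding sorted_generic_points_def by auto
    have "x a < x b \<longleftrightarrow> y a < y b" if "a \<in> {1..m}" "b \<in> {1..m}" for a b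
      using coords_increasing_less_iff[OF x(2) that] coords_increasing_less_iff[OF y(2) that] by simp
    then show "RP_UF m x = RP_UF m y \<longleftrightarrow> sum_order m x = sum_order m y"
      using sum_order_eq_if_RP_UF_eq[OF assms x(1) y(1)] RP_UF_eq_if_sum_order_eq[OF assms x(1) y(1)]
      by blast
  qed
  finally show ?thesis .
qed

lemma card_chambers_mid_arr_eq:
  assumes "3 \<le> m"
  shows "card (chambers m (mid_arr m)) = fact m * r0 m"
  using card_chambers_mid_arr[OF assms] card_sum_order_generic_points[OF assms]
    r0_eq_card_sum_order[OF assms] by simp

section \<open>Equivalence of ranking patterns\<close>

lemma map_permutes_in_RP_UF_iff:
  assumes "r permutes {1..m}"
  shows "map r p \<in> RP_UF m z \<longleftrightarrow> p \<in> RP_UF m (z \<circ> r)"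
proof -
  have inj: "inj r" using assms by (rule permutes_inj)
  have "set (map r p) = {1..m} \<longleftrightarrow> set p = {1..m}"
    using inj_image_eq_iff[OF inj, of "set p" "{1..m}"] permutes_image[OF assms] by simp
  moreover have "inj_on r (set p)" using inj by (rule inj_on_subset) simp
  then have "distinct (map r p) \<longleftrightarrow> distinct p" by (simp add: distinct_map)
  moreover have "map (\<lambda>i. \<bar>y - z i\<bar>) (map r p) = map (\<lambda>i. \<bar>y - (z \<circ> r) i\<bar>) p" for y
    by simp
  ultimately show ?thesis unfolding RP_UF_def permutations_of_set_def by (simp add: comp_def)
qed

lemma RP_UF_comp_permutes:
  assumes "r permutes {1..m}"
  shows "RP_UF m (z \<circ> r) = map (inv r) ` RP_UF m z"
proof (intro equalityI subsetI)
  fix p assume "p \<in> RP_UF m (z \<circ> r)"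
  then have "map r p \<in> RP_UF m z" using map_permutes_in_RP_UF_iff[OF assms] by blast
  moreover have "p = map (inv r) (map r p)" by (simp add: permutes_inv_o[OF assms])
  ultimately show "p \<in> map (inv r) ` RP_UF m z" by blast
next
  fix p assume "p \<in> map (inv r) ` RP_UF m z"
  then obtain q where "q \<in> RP_UF m z" "p = map (inv r) q" by blast
  moreover have "map r (map (inv r) q) = q" by (simp add: permutes_inv_o[OF assms])
  ultimately show "p \<in> RP_UF m (z \<circ> r)" using map_permutes_in_RP_UF_iff[OF assms] by metis
qed

lemma RP_UF_uminus: "RP_UF m (\<lambda>a. - z a) = RP_UF m z"
proof -
  have dist_eq: "map (\<lambda>a. \<bar>y - - z a\<bar>) p = map (\<lambda>a. \<bar>- y - z a\<bar>) p" for y p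
    by (intro map_cong refl) linarith
  have "(\<exists>y. sorted_wrt (<) (map (\<lambda>a. \<bar>y - - z a\<bar>) p))
      \<longleftrightarrow> (\<exists>y. sorted_wrt (<) (map (\<lambda>a. \<bar>y - z a\<bar>) p))" for p
  proof
    assume "\<exists>y. sorted_wrt (<) (map (\<lambda>a. \<bar>y - - z a\<bar>) p)"
    then obtain y where "sorted_wrt (<) (map (\<lambda>a. \<bar>- y - z a\<bar>) p)" unfolding dist_eq by blast
    then show "\<exists>y. sorted_wrt (<) (map (\<lambda>a. \<bar>y - z a\<bar>) p)" by blast
  next
    assume "\<exists>y. sorted_wrt (<) (map (\<lambda>a. \<bar>y - z a\<bar>) p)"
    then obtain y where "sorted_wrt (<) (map (\<lambda>a. \<bar>- (- y) - z a\<bar>) p)" by auto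
    then show "\<exists>y. sorted_wrt (<) (map (\<lambda>a. \<bar>y - - z a\<bar>) p)" unfolding dist_eq[symmetric] by blast
  qed
  then show ?thesis unfolding RP_UF_def by simp
qed

definition rev_index :: "nat \<Rightarrow> nat \<Rightarrow> nat" where
  "rev_index m a = (if a \<in> {1..m} then Suc m - a else a)"

lemma rev_index_rev_index [simp]: "rev_index m (rev_index m a) = a"
  unfolding rev_index_def by auto

lemma rev_index_permutes: "rev_index m permutes {1..m}"
proof (rule bij_imp_permutes)
  show "bij_betw (rev_index m) {1..m} {1..m}"
    by (rule bij_betwI[where g = "rev_index m"]) (auto simp: rev_index_def)
qed (auto simp: rev_index_def)

lemma inv_rev_index: "inv (rev_index m) = rev_index m"
  by (rule inv_unique_comp) (simp_all add: fun_eq_iff)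

lemma generic_uminus:
  assumes "generic m z"
  shows "generic m (\<lambda>a. - z a)"
proof (rule genericI)
  show "(\<lambda>a. - z a) \<in> Rm m" using assms by (simp add: generic_def Rm_def)
  fix i j k l
  assume "i \<in> {1..m}" "j \<in> {1..m}" "k \<in> {1..m}" "l \<in> {1..m}" "i \<noteq> j" "k \<noteq> l" "{i, j} \<noteq> {k, l}"
  then have "z i + z j \<noteq> z k + z l" by (rule generic_sum_neq[OF assms])
  then show "- z i + - z j \<noteq> - z k + - z l" by simp
qed

definition reflect :: "nat \<Rightarrow> (nat \<Rightarrow> real) \<Rightarrow> nat \<Rightarrow> real" where
  "reflect m z = (\<lambda>a. - z (rev_index m a))"

lemma reflect_sorted_generic_points:
  assumes "z \<in> sorted_generic_points m"
  shows "reflect m z \<in> sorted_generic_points m"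
proof -
  have "generic m (z \<circ> rev_index m)"
    using assms rev_index_permutes generic_comp_permutes unfolding sorted_generic_points_def by blast
  then have "generic m (reflect m z)"
    using generic_uminus unfolding reflect_def comp_def by blast
  moreover have "coords_increasing m (reflect m z)" unfolding coords_increasing_def
  proof (intro allI impI)
    fix i assume i: "1 \<le> i \<and> i < m"
    then have "z (m - i) < z (Suc (m - i))"
      using assms unfolding sorted_generic_points_def coords_increasing_def by auto
    then show "reflect m z i < reflect m z (Suc i)"
      using i unfolding reflect_def rev_index_def by (auto simp: Suc_diff_le)
  qed
  ultimately show ?thesis unfolding sorted_generic_points_def by simp
qed

lemma RP_UF_reflect: "RP_UF m (reflect m z) = map (rev_index m) ` RP_UF m z"
proof -
  have "RP_UF m (reflect m z) = RP_UF m (z \<circ> rev_index m)"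
    using RP_UF_uminus[of m "z \<circ> rev_index m"] by (simp add: reflect_def comp_def)
  also have "\<dots> = map (rev_index m) ` RP_UF m z"
    by (simp only: RP_UF_comp_permutes[OF rev_index_permutes] inv_rev_index)
  finally show ?thesis .
qed

lemma sorted_wrt_map_upt:
  "sorted_wrt R (map f [a..<b]) \<longleftrightarrow> (\<forall>i j. a \<le> i \<longrightarrow> i < j \<longrightarrow> j < b \<longrightarrow> R (f i) (f j))"
proof (induction b)
  case (Suc b)
  then show ?case by (auto simp: sorted_wrt_append less_Suc_eq)
qed simp

lemma upt_in_RP_UF:
  assumes "coords_increasing m z"
  shows "[1..<Suc m] \<in> RP_UF m z"
proof -
  have "\<bar>(z 1 - 1) - z a\<bar> < \<bar>(z 1 - 1) - z b\<bar>" if "1 \<le> a" "a < b" "b < Suc m" for a b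
  proof -
    have "z 1 \<le> z a" using coords_increasing_less[OF assms, of 1 a] that by (cases "a = 1") auto
    moreover have "z a < z b" using coords_increasing_less[OF assms, of a b] that by simp
    ultimately show ?thesis by (simp add: abs_if)
  qed
  then have "sorted_wrt (<) (map (\<lambda>i. \<bar>(z 1 - 1) - z i\<bar>) [1..<Suc m])"
    unfolding sorted_wrt_map_upt by blast
  then show ?thesis unfolding RP_UF_def permutations_of_set_def by auto
qed

lemma rev_upt_in_RP_UF:
  assumes "coords_increasing m z"
  shows "rev [1..<Suc m] \<in> RP_UF m z"
proof -
  have "\<bar>(z m + 1) - z b\<bar> < \<bar>(z m + 1) - z a\<bar>" if "1 \<le> a" "a < b" "b < Suc m" for a b
  proof -
    have "z b \<le> z m" using coords_increasing_less[OF assms, of b m] that by (cases "b = m") auto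
    moreover have "z a < z b" using coords_increasing_less[OF assms, of a b] that by simp
    ultimately show ?thesis by (simp add: abs_if)
  qed
  then have "sorted_wrt (\<lambda>u v. v < u) (map (\<lambda>i. \<bar>(z m + 1) - z i\<bar>) [1..<Suc m])"
    unfolding sorted_wrt_map_upt by blast
  then have "sorted_wrt (<) (map (\<lambda>i. \<bar>(z m + 1) - z i\<bar>) (rev [1..<Suc m]))"
    by (simp add: sorted_wrt_rev rev_map[symmetric] del: upt_Suc)
  moreover have "rev [1..<Suc m] \<in> permutations_of_set {1..m}"
    by (auto simp: permutations_of_set_def)
  ultimately show ?thesis unfolding RP_UF_def by blast
qed

lemma abs_diff_sub_mono:
  fixes y1 y2 :: real
  assumes "y1 \<le> y2"
  shows "mono (\<lambda>t. \<bar>y1 - t\<bar> - \<bar>y2 - t\<bar>)"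
  using assms by (intro monoI) linarith

lemma outer_patterns_dist_diff_less:
  assumes "map \<sigma> [1..<Suc m] \<in> RP_UF m z" "map \<sigma> (rev [1..<Suc m]) \<in> RP_UF m z"
  obtains y1 y2 where "\<And>a b. a \<in> {1..m} \<Longrightarrow> b \<in> {1..m} \<Longrightarrow> a < b \<Longrightarrow>
    \<bar>y1 - z (\<sigma> a)\<bar> - \<bar>y2 - z (\<sigma> a)\<bar> < \<bar>y1 - z (\<sigma> b)\<bar> - \<bar>y2 - z (\<sigma> b)\<bar>"
proof -
  obtain y1 where y1: "sorted_wrt (<) (map (\<lambda>i. \<bar>y1 - z i\<bar>) (map \<sigma> [1..<Suc m]))"
    using assms(1) unfolding RP_UF_def by blast
  obtain y2 where y2: "sorted_wrt (<) (map (\<lambda>i. \<bar>y2 - z i\<bar>) (map \<sigma> (rev [1..<Suc m])))"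
    using assms(2) unfolding RP_UF_def by blast
  show ?thesis
    using y1 y2
    by (intro that[of y1 y2])
      (fastforce simp: sorted_wrt_map_upt sorted_wrt_rev rev_map[symmetric] simp del: upt_Suc)
qed

text \<open>The function \<open>t \<mapsto> |y\<^sub>1 - t| - |y\<^sub>2 - t|\<close> is monotone, and it is strictly increasing along
  \<open>z \<circ> \<sigma>\<close>; so \<open>\<sigma>\<close> preserves the order of \<open>[m]\<close> if \<open>y\<^sub>1 \<le> y\<^sub>2\<close> and reverses it otherwise.\<close>

lemma eq_id_or_rev_index_if_outer_patterns:
  assumes z: "coords_increasing m z" and \<sigma>: "bij_betw \<sigma> {1..m} {1..m}"
    and "map \<sigma> [1..<Suc m] \<in> RP_UF m z" "map \<sigma> (rev [1..<Suc m]) \<in> RP_UF m z"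
  shows "(\<forall>a\<in>{1..m}. \<sigma> a = a) \<or> (\<forall>a\<in>{1..m}. \<sigma> a = rev_index m a)"
proof -
  obtain y1 y2 where less: "\<And>a b. a \<in> {1..m} \<Longrightarrow> b \<in> {1..m} \<Longrightarrow> a < b \<Longrightarrow>
    \<bar>y1 - z (\<sigma> a)\<bar> - \<bar>y2 - z (\<sigma> a)\<bar> < \<bar>y1 - z (\<sigma> b)\<bar> - \<bar>y2 - z (\<sigma> b)\<bar>"
    using outer_patterns_dist_diff_less[OF assms(3,4)] by blast
  have into: "\<sigma> ` {1..m} \<subseteq> {1..m}" using \<sigma> by (simp add: bij_betw_def)
  then have less_iff: "z (\<sigma> a) < z (\<sigma> b) \<longleftrightarrow> \<sigma> a < \<sigma> b" if "a \<in> {1..m}" "b \<in> {1..m}" for a b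
    using coords_increasing_less_iff[OF z] that by blast
  show ?thesis
  proof (cases "y1 \<le> y2")
    case True
    have "strict_mono_on {1..m} \<sigma>"
    proof (rule strict_mono_onI)
      fix a b assume "a \<in> {1..m}" "b \<in> {1..m}" "a < b"
      then show "\<sigma> a < \<sigma> b"
        using mono_strict_invE[OF abs_diff_sub_mono[OF True] less] less_iff by blast
    qed
    then show ?thesis using strict_mono_on_self_eq into by blast
  next
    case False
    have "strict_mono_on {1..m} (rev_index m \<circ> \<sigma>)"
    proof (rule strict_mono_onI)
      fix a b assume ab: "a \<in> {1..m}" "b \<in> {1..m}" "a < b"
      have "\<bar>y2 - z (\<sigma> b)\<bar> - \<bar>y1 - z (\<sigma> b)\<bar> < \<bar>y2 - z (\<sigma> a)\<bar> - \<bar>y1 - z (\<sigma> a)\<bar>"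
        using less[OF ab] by linarith
      then have "z (\<sigma> b) < z (\<sigma> a)"
        using mono_strict_invE[OF abs_diff_sub_mono[of y2 y1]] False by fastforce
      moreover have "\<sigma> a \<in> {1..m}" "\<sigma> b \<in> {1..m}" using into ab by (auto simp: image_subset_iff)
      ultimately show "(rev_index m \<circ> \<sigma>) a < (rev_index m \<circ> \<sigma>) b"
        using less_iff[OF ab(2,1)] unfolding rev_index_def by auto
    qed
    moreover have "(rev_index m \<circ> \<sigma>) ` {1..m} \<subseteq> {1..m}"
      using into permutes_image[OF rev_index_permutes] by (auto simp: image_comp[symmetric])
    ultimately have "rev_index m (\<sigma> a) = a" if "a \<in> {1..m}" for a
      using strict_mono_on_self_eq that by fastforce
    then have "\<sigma> a = rev_index m a" if "a \<in> {1..m}" for a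
      using that by (metis rev_index_rev_index)
    then show ?thesis by blast
  qed
qed

lemma RP_equiv_sorted_cases:
  assumes z: "z \<in> sorted_generic_points m" and z': "z' \<in> sorted_generic_points m"
    and equiv: "RP_equiv m (RP_UF m z) (RP_UF m z')"
  shows "RP_UF m z = RP_UF m z' \<or> RP_UF m z = map (rev_index m) ` RP_UF m z'"
proof -
  obtain \<sigma> where \<sigma>: "bij_betw \<sigma> {1..m} {1..m}" and eq: "RP_UF m z = map \<sigma> ` RP_UF m z'"
    using equiv unfolding RP_equiv_def by blast
  have inc: "coords_increasing m z" "coords_increasing m z'"
    using z z' unfolding sorted_generic_points_def by auto
  have "map \<sigma> [1..<Suc m] \<in> RP_UF m z" "map \<sigma> (rev [1..<Suc m]) \<in> RP_UF m z"
    unfolding eq using upt_in_RP_UF[OF inc(2)] rev_upt_in_RP_UF[OF inc(2)] by blast+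
  then consider (id) "\<forall>a\<in>{1..m}. \<sigma> a = a" | (rev) "\<forall>a\<in>{1..m}. \<sigma> a = rev_index m a"
    using eq_id_or_rev_index_if_outer_patterns[OF inc(1) \<sigma>] by blast
  moreover have set_p: "set p \<subseteq> {1..m}" if "p \<in> RP_UF m z'" for p
    using that unfolding RP_UF_def permutations_of_set_def by auto
  ultimately show ?thesis
  proof cases
    case id
    have "map \<sigma> p = p" if "p \<in> RP_UF m z'" for p
      using set_p[OF that] id by (intro map_idI) blast
    then show ?thesis unfolding eq by simp
  next
    case rev
    have "map \<sigma> p = map (rev_index m) p" if "p \<in> RP_UF m z'" for p
      using set_p[OF that] rev by (intro map_cong refl) blast
    then have "map \<sigma> ` RP_UF m z' = map (rev_index m) ` RP_UF m z'" by (rule image_cong[OF refl])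
    then show ?thesis unfolding eq by blast
  qed
qed

definition RP_rel :: "nat \<Rightarrow> (nat list set \<times> nat list set) set" where
  "RP_rel m = {(P, Q). P \<in> RPs m \<and> Q \<in> RPs m \<and> RP_equiv m P Q}"

lemma equiv_RP_rel: "equiv (RPs m) (RP_rel m)"
proof (rule equivI)
  show "RP_rel m \<subseteq> RPs m \<times> RPs m" unfolding RP_rel_def by auto
  have "P = map id ` P" for P :: "nat list set" by simp
  then show "refl_on (RPs m) (RP_rel m)"
    unfolding RP_rel_def RP_equiv_def by (intro refl_onI) (auto intro: bij_betw_id)
  show "sym (RP_rel m)"
  proof (rule symI)
    fix P Q assume "(P, Q) \<in> RP_rel m"
    then obtain \<sigma> where PQ: "P \<in> RPs m" "Q \<in> RPs m" "bij_betw \<sigma> {1..m} {1..m}" "P = map \<sigma> ` Q"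
      unfolding RP_rel_def RP_equiv_def by blast
    have "map (inv_into {1..m} \<sigma>) (map \<sigma> q) = q" if "q \<in> Q" for q
    proof -
      have "set q \<subseteq> {1..m}"
        using PQ(2) that unfolding RPs_def RP_UF_def permutations_of_set_def by auto
      then have "inv_into {1..m} \<sigma> (\<sigma> a) = a" if "a \<in> set q" for a
        using that bij_betw_inv_into_left[OF PQ(3)] by blast
      then show ?thesis by (simp add: map_idI)
    qed
    then have "Q = map (inv_into {1..m} \<sigma>) ` P" unfolding PQ(4) image_image by simp
    then show "(Q, P) \<in> RP_rel m"
      using PQ(1,2) bij_betw_inv_into[OF PQ(3)] unfolding RP_rel_def RP_equiv_def by blast
  qed
  show "trans (RP_rel m)"
  proof (rule transI)
    fix P Q R assume "(P, Q) \<in> RP_rel m" "(Q, R) \<in> RP_rel m"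
    then obtain \<sigma> \<tau> where "P \<in> RPs m" "R \<in> RPs m" "bij_betw \<sigma> {1..m} {1..m}" "P = map \<sigma> ` Q"
      "bij_betw \<tau> {1..m} {1..m}" "Q = map \<tau> ` R"
      unfolding RP_rel_def RP_equiv_def by blast
    moreover from this have "bij_betw (\<sigma> \<circ> \<tau>) {1..m} {1..m}" "P = map (\<sigma> \<circ> \<tau>) ` R"
      by (auto intro: bij_betw_trans simp: image_image)
    ultimately show "(P, R) \<in> RP_rel m" unfolding RP_rel_def RP_equiv_def by blast
  qed
qed

lemma sorted_RP_UF_in_RPs: "RP_UF m ` sorted_generic_points m \<subseteq> RPs m"
  unfolding RPs_def sorted_generic_points_def by blast

lemma RP_rel_if_permutes:
  assumes "P \<in> RPs m" "Q \<in> RPs m" "r permutes {1..m}" "P = map r ` Q"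
  shows "(P, Q) \<in> RP_rel m"
  using assms permutes_imp_bij[OF assms(3)] unfolding RP_rel_def RP_equiv_def by blast

lemma RPs_quotient_sorted:
  assumes "3 \<le> m"
  shows "RPs m // RP_rel m = (\<lambda>Q. RP_rel m `` {Q}) ` RP_UF m ` sorted_generic_points m"
proof (intro equalityI subsetI)
  fix c assume "c \<in> RPs m // RP_rel m"
  then obtain x where x: "generic m x" "c = RP_rel m `` {RP_UF m x}"
    unfolding RPs_def by (auto elim!: quotientE)
  obtain r z where rz: "r permutes {1..m}" "z \<in> sorted_generic_points m" "x = z \<circ> r"
    using generic_sorted_decomposition[OF x(1) assms] .
  have "RP_UF m x \<in> RPs m" "RP_UF m z \<in> RPs m"
    using x(1) rz(2) sorted_RP_UF_in_RPs unfolding RPs_def by blast+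
  moreover have "RP_UF m x = map (inv r) ` RP_UF m z"
    unfolding rz(3) by (rule RP_UF_comp_permutes[OF rz(1)])
  ultimately have "(RP_UF m x, RP_UF m z) \<in> RP_rel m"
    using RP_rel_if_permutes permutes_inv[OF rz(1)] by blast
  then have "c = RP_rel m `` {RP_UF m z}" unfolding x(2) by (rule equiv_class_eq[OF equiv_RP_rel])
  then show "c \<in> (\<lambda>Q. RP_rel m `` {Q}) ` RP_UF m ` sorted_generic_points m" using rz(2) by blast
next
  fix c assume "c \<in> (\<lambda>Q. RP_rel m `` {Q}) ` RP_UF m ` sorted_generic_points m"
  then show "c \<in> RPs m // RP_rel m" using sorted_RP_UF_in_RPs by (auto intro: quotientI)
qed

lemma r_IE_eq_card_sorted_classes:
  assumes "3 \<le> m"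
  shows "r_IE m = card ((\<lambda>Q. RP_rel m `` {Q}) ` RP_UF m ` sorted_generic_points m)"
  unfolding r_IE_def RP_rel_def[symmetric] RPs_quotient_sorted[OF assms] ..

lemma sorted_class_members:
  assumes z: "z \<in> sorted_generic_points m"
  shows "{Q \<in> RP_UF m ` sorted_generic_points m. RP_rel m `` {Q} = RP_rel m `` {RP_UF m z}}
    = {RP_UF m z, map (rev_index m) ` RP_UF m z}"
proof (intro equalityI subsetI)
  have zR: "RP_UF m z \<in> RPs m" using z sorted_RP_UF_in_RPs by blast
  fix Q assume "Q \<in> {Q \<in> RP_UF m ` sorted_generic_points m. RP_rel m `` {Q} = RP_rel m `` {RP_UF m z}}"
  then obtain z' where z': "z' \<in> sorted_generic_points m" "Q = RP_UF m z'"
    and cls: "RP_rel m `` {Q} = RP_rel m `` {RP_UF m z}" by blast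
  have "Q \<in> RPs m" using z' sorted_RP_UF_in_RPs by blast
  then have "(Q, RP_UF m z) \<in> RP_rel m" using cls eq_equiv_class_iff[OF equiv_RP_rel _ zR] by blast
  then have "RP_equiv m (RP_UF m z') (RP_UF m z)" unfolding RP_rel_def z'(2) by simp
  then show "Q \<in> {RP_UF m z, map (rev_index m) ` RP_UF m z}"
    using RP_equiv_sorted_cases[OF z'(1) z] z'(2) by blast
next
  have zR: "RP_UF m z \<in> RPs m" using z sorted_RP_UF_in_RPs by blast
  have rev_sorted: "map (rev_index m) ` RP_UF m z \<in> RP_UF m ` sorted_generic_points m"
    using reflect_sorted_generic_points[OF z] RP_UF_reflect by (metis image_eqI)
  then have "(map (rev_index m) ` RP_UF m z, RP_UF m z) \<in> RP_rel m"
    using sorted_RP_UF_in_RPs zR by (intro RP_rel_if_permutes[OF _ _ rev_index_permutes refl]) blast+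
  then have "RP_rel m `` {map (rev_index m) ` RP_UF m z} = RP_rel m `` {RP_UF m z}"
    by (rule equiv_class_eq[OF equiv_RP_rel])
  fix Q assume "Q \<in> {RP_UF m z, map (rev_index m) ` RP_UF m z}"
  then show "Q \<in> {Q \<in> RP_UF m ` sorted_generic_points m. RP_rel m `` {Q} = RP_rel m `` {RP_UF m z}}"
    using z rev_sorted \<open>RP_rel m `` {_} = _\<close> by auto
qed

text \<open>For \<open>m \<ge> 4\<close> the hyperplane \<open>x\<^sub>1 + x\<^sub>m = x\<^sub>2 + x\<^sub>m\<^sub>-\<^sub>1\<close> separates a sorted point from its reflection.\<close>

lemma RP_UF_reflect_neq:
  assumes "4 \<le> m" and z: "z \<in> sorted_generic_points m"
  shows "map (rev_index m) ` RP_UF m z \<noteq> RP_UF m z"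
proof
  assume eq: "map (rev_index m) ` RP_UF m z = RP_UF m z"
  have z': "reflect m z \<in> sorted_generic_points m" using reflect_sorted_generic_points[OF z] .
  have g: "generic m z" "coords_increasing m z" "generic m (reflect m z)"
    "coords_increasing m (reflect m z)" using z z' unfolding sorted_generic_points_def by auto
  have "sum_order m (reflect m z) = sum_order m z"
  proof (rule sum_order_eq_if_RP_UF_eq)
    show "reflect m z a < reflect m z b \<longleftrightarrow> z a < z b" if "a \<in> {1..m}" "b \<in> {1..m}" for a b
      using coords_increasing_less_iff[OF g(2) that] coords_increasing_less_iff[OF g(4) that] by simp
  qed (use assms g eq RP_UF_reflect in auto)
  moreover have idx: "1 \<in> {1..m}" "m \<in> {1..m}" "2 \<in> {1..m}" "m - 1 \<in> {1..m}" "1 \<noteq> m" "2 \<noteq> m - 1"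
    using assms by auto
  moreover have "rev_index m 1 = m" "rev_index m m = 1" "rev_index m 2 = m - 1" "rev_index m (m - 1) = 2"
    using assms unfolding rev_index_def by auto
  then have "sum_order m (reflect m z) (1, m, 2, m - 1) \<longleftrightarrow> z 2 + z (m - 1) < z 1 + z m"
    using sum_order_pair[OF idx] by (auto simp: reflect_def)
  moreover have "sum_order m z (1, m, 2, m - 1) \<longleftrightarrow> z 1 + z m < z 2 + z (m - 1)"
    using sum_order_pair[OF idx] .
  moreover have "z 1 + z m \<noteq> z 2 + z (m - 1)"
    using idx assms(1) by (intro generic_sum_neq[OF g(1)]) (auto simp: doubleton_eq_iff)
  ultimately show False by (metis less_asym linorder_neqE_linordered_idom)
qed

lemma r0_eq_twice_r_IE:
  assumes "4 \<le> m"
  shows "r0 m = 2 * r_IE m"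
proof -
  have m3: "3 \<le> m" using assms by simp
  define I where "I = RP_UF m ` sorted_generic_points m"
  define cls where "cls Q = RP_rel m `` {Q}" for Q
  have "finite I"
    unfolding I_def by (rule finite_subset[of _ "Pow (permutations_of_set {1..m})"])
      (auto simp: RP_UF_def)
  have "card I = card (\<Union>c\<in>cls ` I. {Q \<in> I. cls Q = c})" by (rule arg_cong[of _ _ card]) auto
  also have "\<dots> = (\<Sum>c\<in>cls ` I. card {Q \<in> I. cls Q = c})"
    by (rule card_UN_disjoint) (use \<open>finite I\<close> in auto)
  also have "\<dots> = (\<Sum>c\<in>cls ` I. 2)"
  proof (rule sum.cong[OF refl])
    fix c assume "c \<in> cls ` I"
    then obtain z where z: "z \<in> sorted_generic_points m" "c = cls (RP_UF m z)" unfolding I_def by blast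
    show "card {Q \<in> I. cls Q = c} = 2"
      using sorted_class_members[OF z(1)] RP_UF_reflect_neq[OF assms z(1)]
      unfolding z(2) I_def cls_def by (simp add: card_insert_if)
  qed
  finally have "card I = 2 * card (cls ` I)" by simp
  then show ?thesis
    unfolding r0_eq_card_RP_UF r_IE_eq_card_sorted_classes[OF m3] I_def cls_def by simp
qed

section \<open>Three points\<close>

lemma pair_sum_less_iff_3:
  assumes "coords_increasing 3 z" "i \<in> {1..3}" "j \<in> {1..3}" "k \<in> {1..3}" "l \<in> {1..3}"
    and "i \<noteq> j" "k \<noteq> l"
  shows "z i + z j < z k + z l \<longleftrightarrow> i + j < k + l"
proof -
  have "z 1 < z 2" "z 2 < z 3" using coords_increasing_less[OF assms(1)] by simp_all
  moreover have "i = 1 \<or> i = 2 \<or> i = 3" "j = 1 \<or> j = 2 \<or> j = 3" "k = 1 \<or> k = 2 \<or> k = 3"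
    "l = 1 \<or> l = 2 \<or> l = 3" using assms(2-5) by auto
  ultimately show ?thesis using assms(6,7) by (elim disjE) auto
qed

lemma sum_order_sorted_3:
  assumes "z \<in> sorted_generic_points 3" "z' \<in> sorted_generic_points 3"
  shows "sum_order 3 z = sum_order 3 z'"
proof
  fix q :: "nat \<times> nat \<times> nat \<times> nat"
  obtain i j k l where q: "q = (i, j, k, l)" by (cases q)
  have inc: "coords_increasing 3 z" "coords_increasing 3 z'"
    using assms unfolding sorted_generic_points_def by auto
  show "sum_order 3 z q = sum_order 3 z' q"
  proof (cases "q \<in> index_quads 3")
    case True
    then have rng: "i \<in> {1..3}" "j \<in> {1..3}" "k \<in> {1..3}" "l \<in> {1..3}"
      and "i \<noteq> j \<and> k \<noteq> l \<or> i = j \<and> k = l" unfolding q index_quads_def by auto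
    then consider "i \<noteq> j" "k \<noteq> l" | "i = j" "k = l" by blast
    then show ?thesis
    proof cases
      case 1
      then show ?thesis unfolding q using rng
        by (simp add: sum_order_pair pair_sum_less_iff_3[OF inc(1)] pair_sum_less_iff_3[OF inc(2)])
    next
      case 2
      then show ?thesis unfolding q using rng
        by (simp add: sum_order_diag coords_increasing_less_iff[OF inc(1)] coords_increasing_less_iff[OF inc(2)])
    qed
  qed (simp add: sum_order_def q)
qed

lemma sorted_generic_points_3_nonempty: "sorted_generic_points 3 \<noteq> {}"
proof -
  define x :: "nat \<Rightarrow> real" where "x a = (if a = 2 then 1 else if a = 3 then 3 else 0)" for a
  have "generic 3 x" unfolding generic_def
  proof (intro conjI allI impI)
    show "x \<in> Rm 3" unfolding Rm_def x_def by auto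
    fix i j k l :: nat
    assume "1 \<le> i \<and> i < j \<and> j \<le> 3 \<and> 1 \<le> k \<and> k < l \<and> l \<le> 3 \<and> (i, j) \<noteq> (k, l)"
    moreover have "(i = 1 \<and> j = 2) \<or> (i = 1 \<and> j = 3) \<or> (i = 2 \<and> j = 3)"
      if "1 \<le> i" "i < j" "j \<le> (3::nat)" for i j using that by auto
    ultimately show "(x i + x j) / 2 \<noteq> (x k + x l) / 2" by (auto simp: x_def)
  qed
  moreover have "coords_increasing 3 x"
    unfolding coords_increasing_def x_def by (auto simp: less_Suc_eq numeral_eq_Suc)
  ultimately show ?thesis unfolding sorted_generic_points_def by blast
qed

lemma RP_UF_sorted_3_singleton:
  obtains P where "RP_UF 3 ` sorted_generic_points 3 = {P}"
proof -
  obtain x where x: "x \<in> sorted_generic_points 3" using sorted_generic_points_3_nonempty by blast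
  have "RP_UF 3 z = RP_UF 3 x" if "z \<in> sorted_generic_points 3" for z
    using that x sum_order_sorted_3[OF that x]
    by (intro RP_UF_eq_if_sum_order_eq) (auto simp: sorted_generic_points_def)
  then have "RP_UF 3 ` sorted_generic_points 3 = {RP_UF 3 x}" using x by blast
  then show ?thesis by (rule that)
qed

lemma mid_arr_3: "mid_arr 3 = braid_arr 3"
proof -
  have "\<not> (distinct [i, j, k, l] \<and> 1 \<le> i \<and> i < j \<and> j \<le> 3 \<and> i < k \<and> k < l \<and> l \<le> (3::nat))"
    for i j k l by auto
  then show ?thesis unfolding mid_arr_def by blast
qed

lemma r0_3: "r0 3 = 1"
proof -
  obtain P where "RP_UF 3 ` sorted_generic_points 3 = {P}" by (rule RP_UF_sorted_3_singleton)
  then show ?thesis unfolding r0_eq_card_RP_UF by simp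
qed

lemma r_IE_3: "r_IE 3 = 1"
proof -
  obtain P where "RP_UF 3 ` sorted_generic_points 3 = {P}" by (rule RP_UF_sorted_3_singleton)
  then show ?thesis unfolding r_IE_eq_card_sorted_classes[OF order_refl] by simp
qed

theorem theorem3p3:
  fixes m :: nat
  assumes "m \<ge> 3"
  shows "(m = 3 \<longrightarrow> r_IE 3 = r0 3 \<and> real (r0 3) = real (card (chambers 3 (braid_arr 3))) / fact 3
                   \<and> r_IE 3 = 1)
       \<and> (m \<ge> 4 \<longrightarrow> real (r_IE m) = real (r0 m) / 2
                   \<and> real (r0 m) / 2 = real (card (chambers m (mid_arr m))) / (2 * fact m))"
proof (intro conjI impI)
  show "r_IE 3 = r0 3" "r_IE 3 = 1" using r_IE_3 r0_3 by simp_all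
  have "card (chambers 3 (braid_arr 3)) = fact 3 * r0 3"
    using card_chambers_mid_arr_eq[of 3] mid_arr_3 by simp
  then show "real (r0 3) = real (card (chambers 3 (braid_arr 3))) / fact 3"
    by (simp add: field_simps)
next
  assume "m \<ge> 4"
  then show "real (r_IE m) = real (r0 m) / 2" using r0_eq_twice_r_IE by simp
  have "card (chambers m (mid_arr m)) = fact m * r0 m"
    using card_chambers_mid_arr_eq \<open>m \<ge> 4\<close> by simp
  then show "real (r0 m) / 2 = real (card (chambers m (mid_arr m))) / (2 * fact m)"
    by (simp add: field_simps)
qed

end
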